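(* Let $G$ be a group, $E$ a real Banach space, and $f\colon G\to E$ such that $\|f(xy)+f(xy^{-1})-2f(x)\|\le c$ for all $x,y\in G$, where $c>0$. Define $c_1=c+2\|f(1)\|$, $c_2=c+\|f(1)\|$, $c_3=c+c_1$, and $c_m=c+c_1+c_{m-2}$ for $m>3$. Then for every integer $m>1$, every $k\in\mathbb{N}$ and every $x\in G$, $\|f(x^{m^k})-m^kf(x)\|\le c_m(1+m+\cdots+m^{k-1})$ and $\left\|\frac{1}{m^k}f(x^{m^k})-f(x)\right\|\le c_m$. *)

theory Defs
  imports "HOL-Analysis.Analysis" "HOL-Algebra.Group"
begin

text \<open>The constants c_m of the paper, as a function of c and a = norm (f 1):
  c_1 = c + 2a, c_2 = c + a, c_3 = c + c_1, c_m = c + c_1 + c_(m-2) for m > 3.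
  The value at m = 0 is irrelevant (set to 0).\<close>
fun cconst :: "real \<Rightarrow> real \<Rightarrow> nat \<Rightarrow> real" where
  "cconst c a 0 = 0"
| "cconst c a (Suc 0) = c + 2 * a"
| "cconst c a (Suc (Suc 0)) = c + a"
| "cconst c a (Suc (Suc (Suc 0))) = c + (c + 2 * a)"
| "cconst c a (Suc (Suc (Suc (Suc n)))) = c + (c + 2 * a) + cconst c a (Suc (Suc n))"

end

theory Submission
  imports Defs
begin

text \<open>Taking \<open>x = \<one>\<close> in the hypothesis shows that \<open>f y + f (inv y)\<close> is bounded, and taking
  \<open>y = x [^] (n + 1)\<close> relates \<open>f (x [^] (n + 2))\<close> to \<open>2 f x - f (inv (x [^] n))\<close>. Together
  these give the two-step recursion behind the constants \<open>c\<^sub>m\<close>: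
  \<open>\<parallel>f (x [^] (n + 2)) - (n + 2) f x\<parallel> \<le> c + c\<^sub>1 + \<parallel>f (x [^] n) - n f x\<parallel>\<close>, hence
  \<open>\<parallel>f (x [^] m) - m f x\<parallel> \<le> c\<^sub>m\<close>. Iterating \<open>y \<mapsto> y [^] m\<close> turns this into a geometric bound for
  \<open>x [^] (m ^ k)\<close>, and \<open>1 + m + \<dots> + m ^ (k - 1) \<le> m ^ k\<close> yields the normalised estimate.\<close>

locale approx_jensen = group G for G (structure) +
  fixes f :: "'g \<Rightarrow> 'e::real_normed_vector" and c :: real
  assumes jensen_defect_le:
    "\<And>x y. x \<in> carrier G \<Longrightarrow> y \<in> carrier G \<Longrightarrow> norm (f (x \<otimes> y) + f (x \<otimes> inv y) - 2 *\<^sub>R f x) \<le> c"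
begin

lemma defect_bound_nonneg: "0 \<le> c"
  using jensen_defect_le[of \<one> \<one>] by (simp add: scaleR_2)

lemma norm_add_inv_le: "y \<in> carrier G \<Longrightarrow> norm (f y + f (inv y)) \<le> c + 2 * norm (f \<one>)"
  using jensen_defect_le[of \<one> y] norm_triangle_sub[of "f y + f (inv y)" "2 *\<^sub>R f \<one>"] by simp

lemma jensen_defect_pow_le:
  assumes x: "x \<in> carrier G"
  shows "norm (f (x [^] Suc (Suc n)) + f (inv (x [^] n)) - 2 *\<^sub>R f x) \<le> c"
proof -
  have "x [^] Suc (Suc n) = x \<otimes> x [^] Suc n"
    using x nat_pow_Suc2 by blast
  moreover have "x \<otimes> inv (x [^] Suc n) = inv (x [^] n)"
    using x by (simp add: inv_mult_group m_assoc[symmetric])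
  ultimately show ?thesis
    using jensen_defect_le[of x "x [^] Suc n"] x by simp
qed

lemma norm_pow_two_deviation_le:
  assumes x: "x \<in> carrier G"
  shows "norm (f (x [^] (2::nat)) - 2 *\<^sub>R f x) \<le> c + norm (f \<one>)"
proof -
  have "f (x [^] (2::nat)) - 2 *\<^sub>R f x
      = (f (x [^] Suc (Suc 0)) + f (inv (x [^] (0::nat))) - 2 *\<^sub>R f x) - f \<one>"
    by (simp add: numeral_2_eq_2)
  also have "norm \<dots> \<le> norm (f (x [^] Suc (Suc 0)) + f (inv (x [^] (0::nat))) - 2 *\<^sub>R f x) + norm (f \<one>)"
    by (rule norm_triangle_ineq4)
  also have "\<dots> \<le> c + norm (f \<one>)"
    by (intro add_right_mono jensen_defect_pow_le x)
  finally show ?thesis .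
qed

lemma norm_pow_add_two_deviation_le:
  assumes x: "x \<in> carrier G"
  shows "norm (f (x [^] (n + 2)) - real (n + 2) *\<^sub>R f x)
    \<le> c + (c + 2 * norm (f \<one>)) + norm (f (x [^] n) - real n *\<^sub>R f x)"
proof -
  let ?y = "inv (x [^] n)"
  have "f (x [^] (n + 2)) - real (n + 2) *\<^sub>R f x
      = (f (x [^] Suc (Suc n)) + f ?y - 2 *\<^sub>R f x) - (f (x [^] n) + f ?y)
        + (f (x [^] n) - real n *\<^sub>R f x)"
    by (simp add: algebra_simps)
  also have "norm \<dots> \<le> norm (f (x [^] Suc (Suc n)) + f ?y - 2 *\<^sub>R f x)
      + norm (f (x [^] n) + f ?y) + norm (f (x [^] n) - real n *\<^sub>R f x)"
    by (rule order_trans[OF norm_triangle_ineq add_right_mono[OF norm_triangle_ineq4]])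
  also have "\<dots> \<le> c + (c + 2 * norm (f \<one>)) + norm (f (x [^] n) - real n *\<^sub>R f x)"
    using jensen_defect_pow_le[OF x] norm_add_inv_le x by (intro add_mono) auto
  finally show ?thesis .
qed

lemma norm_pow_deviation_le_cconst:
  assumes x: "x \<in> carrier G"
  shows "1 \<le> n \<Longrightarrow> norm (f (x [^] n) - real n *\<^sub>R f x) \<le> cconst c (norm (f \<one>)) n"
proof (induction n rule: nat_induct2)
  case 1
  show ?case using defect_bound_nonneg x by simp
next
  case (step n)
  consider "n = 0" | "n = 1" | p where "n = Suc (Suc p)"
    by (metis One_nat_def not0_implies_Suc)
  then show ?case
  proof cases
    case 1
    then show ?thesis using norm_pow_two_deviation_le[OF x] by (simp add: numeral_2_eq_2)
  next
    case 2
    then show ?thesis using norm_pow_add_two_deviation_le[OF x, of 1] x by simp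
  next
    case 3
    then show ?thesis
      using norm_pow_add_two_deviation_le[OF x, of n] step.IH by (simp add: numeral_2_eq_2)
  qed
qed simp

end

lemma (in monoid) norm_pow_power_deviation_le:
  fixes f :: "'a \<Rightarrow> 'e::real_normed_vector"
  assumes bound: "\<And>y. y \<in> carrier G \<Longrightarrow> norm (f (y [^] m) - real m *\<^sub>R f y) \<le> C"
    and x: "x \<in> carrier G"
  shows "norm (f (x [^] (m ^ k)) - real (m ^ k) *\<^sub>R f x) \<le> C * (\<Sum>i<k. real m ^ i)"
proof (induction k)
  case 0
  then show ?case using x by simp
next
  case (Suc k)
  define y where "y = x [^] (m ^ k)"
  have y: "y \<in> carrier G" using x y_def by simp
  have "f (x [^] (m ^ Suc k)) - real (m ^ Suc k) *\<^sub>R f x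
      = (f (y [^] m) - real m *\<^sub>R f y) + real m *\<^sub>R (f y - real (m ^ k) *\<^sub>R f x)"
    using x by (simp add: y_def nat_pow_pow mult.commute algebra_simps)
  also have "norm \<dots> \<le> norm (f (y [^] m) - real m *\<^sub>R f y) + real m * norm (f y - real (m ^ k) *\<^sub>R f x)"
    by (rule order_trans[OF norm_triangle_ineq]) simp
  also have "\<dots> \<le> C + real m * (C * (\<Sum>i<k. real m ^ i))"
    using bound[OF y] Suc.IH y_def by (intro add_mono mult_left_mono) auto
  also have "\<dots> = C * (1 + real m * (\<Sum>i<k. real m ^ i))"
    by (simp add: algebra_simps)
  also have "1 + real m * (\<Sum>i<k. real m ^ i) = (\<Sum>i<Suc k. real m ^ i)"
    by (simp only: sum.lessThan_Suc_shift sum_distrib_left power_Suc power_0)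
  finally show ?case .
qed

lemma sum_powers_le_power:
  fixes m :: real
  assumes "2 \<le> m"
  shows "(\<Sum>i<k. m ^ i) \<le> m ^ k"
proof (induction k)
  case (Suc k)
  have "(\<Sum>i<Suc k. m ^ i) = (\<Sum>i<k. m ^ i) + m ^ k"
    by simp
  also have "\<dots> \<le> 2 * m ^ k"
    using Suc.IH by simp
  also have "\<dots> \<le> m * m ^ k"
    using assms by (intro mult_right_mono) auto
  finally show ?case
    by simp
qed simp

lemma norm_scaled_deviation_le:
  fixes u v :: "'e::real_normed_vector"
  assumes "norm (u - N *\<^sub>R v) \<le> C * S" and "0 \<le> C" and "S \<le> N" and "0 < N"
  shows "norm ((1 / N) *\<^sub>R u - v) \<le> C"
proof -
  have "(1 / N) *\<^sub>R u - v = (1 / N) *\<^sub>R (u - N *\<^sub>R v)"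
    using \<open>0 < N\<close> by (simp add: scaleR_diff_right)
  then have "norm ((1 / N) *\<^sub>R u - v) = norm (u - N *\<^sub>R v) / N"
    using \<open>0 < N\<close> by simp
  also have "\<dots> \<le> C * S / N"
    using assms(1,4) by (intro divide_right_mono) auto
  also have "\<dots> \<le> C * N / N"
    using assms(2-4) by (intro divide_right_mono mult_left_mono) auto
  finally show ?thesis
    using \<open>0 < N\<close> by simp
qed

theorem lemma2p4:
  fixes G (structure) and f :: "'g \<Rightarrow> 'e::banach" and c :: real
  assumes "group G"
    and "c > 0"
    and "\<And>x y. x \<in> carrier G \<Longrightarrow> y \<in> carrier G \<Longrightarrow>
           norm (f (x \<otimes> y) + f (x \<otimes> inv y) - 2 *\<^sub>R f x) \<le> c"
    and "m > (1::nat)"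
    and "x \<in> carrier G"
  shows "norm (f (x [^] (m ^ k)) - real (m ^ k) *\<^sub>R f x)
           \<le> cconst c (norm (f \<one>)) m * (\<Sum>i<k. real m ^ i)
       \<and> norm ((1 / real (m ^ k)) *\<^sub>R f (x [^] (m ^ k)) - f x)
           \<le> cconst c (norm (f \<one>)) m"
proof -
  interpret approx_jensen G f c
    using assms(1,3) by (simp add: approx_jensen_def approx_jensen_axioms_def)
  let ?C = "cconst c (norm (f \<one>)) m"
  have base: "norm (f (y [^] m) - real m *\<^sub>R f y) \<le> ?C" if "y \<in> carrier G" for y
    using norm_pow_deviation_le_cconst[OF that] assms(4) by simp
  have "norm (f (x [^] (m ^ k)) - real (m ^ k) *\<^sub>R f x) \<le> ?C * (\<Sum>i<k. real m ^ i)"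
    by (rule norm_pow_power_deviation_le[where f = f, OF base assms(5)])
  moreover have "0 \<le> ?C"
    using base[OF assms(5)] norm_ge_zero order_trans by blast
  moreover have "(\<Sum>i<k. real m ^ i) \<le> real (m ^ k)"
    using sum_powers_le_power[of "real m" k] assms(4) by simp
  moreover have "0 < real (m ^ k)"
    using assms(4) by simp
  ultimately show ?thesis
    using norm_scaled_deviation_le by blast
qed

end
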